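(* Let $S$ and $T$ be trees and give $E(S)\times E(T)$ the product partial order. Sending a shuffle $A$ of $S$ and $T$ to its set of edge labels gives a bijection between $Sh(S,T)$ and the set of subsets $A\subseteq E(S)\times E(T)$ satisfying: (1) the induced partial order on $A$ is treelike; (2) the set of maximal elements of $A$ is exactly $\mathrm{Leaves}(S)\times\mathrm{Leaves}(T)$; (3) $A$ is maximal under inclusion among subsets satisfying (1) and (2). Moreover, for a shuffle, the tree order on its edges coincides with the order induced from $E(S)\times E(T)$.
   Context: A tree is a finite connected graph without cycles whose external edges are open (attached to only one vertex). One external edge is designated the root; the other external edges are the leaves. Each vertex has exactly one outgoing edge (towards the root) and a strictly positive number of incoming edges. Trees carry no planar structure. $E(T)$ denotes the set of edges of $T$, partially ordered by $e\le e'$ iff $e$ lies on the path from $e'$ to the root; $r_T$ denotes the root edge. For a non-leaf edge $e$, the edges immediately above $e$ are the incoming edges of the vertex whose outgoing edge is $e$. A partial order is treelike if it is finite, has a smallest element, and for each element $e$ the set $\{d: d\le e\}$ is linearly ordered (this is exactly the edge order of a tree). Shuffle: for trees $S,T$, a shuffle of $S$ and $T$ is a tree $A$ with a labelling of each edge by a pair $(s,t)\in E(S)\times E(T)$ such that: (1) the root of $A$ is labelled $(r_S,r_T)$; (2) the labelling restricts to a bijection from the leaves of $A$ onto $\mathrm{Leaves}(S)\times \mathrm{Leaves}(T)$; (3) if an edge of $A$ labelled $(s,t)$ is not a leaf of $A$, then the incoming edges of the vertex of $A$ directly above it are labelled either exactly $(s_1,t),\dots,(s_m,t)$, one for each edge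 $s_i$ immediately above $s$ in $S$, or exactly $(s,t_1),\dots,(s,t_n)$, one for each edge $t_j$ immediately above $t$ in $T$. Shuffles are taken up to isomorphism of labelled trees; $Sh(S,T)$ is the set of shuffles. *)

theory Defs
  imports Main
begin

text \<open>A tree is represented by its set of edges E together with the edge order le
  (e \<le> e' iff e lies on the path from e' to the root).  As stated in the paper,
  the edge orders of trees are exactly the treelike partial orders, and the tree
  (without planar structure) is recovered from its edge order up to isomorphism.\<close>

definition treelike :: "'e set \<Rightarrow> ('e \<Rightarrow> 'e \<Rightarrow> bool) \<Rightarrow> bool" where
  "treelike E le \<longleftrightarrow>
     finite E \<and>
     (\<forall>x\<in>E. le x x) \<and>
     (\<forall>x\<in>E. \<forall>y\<in>E. le x y \<and> le y x \<longrightarrow> x = y) \<and>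
     (\<forall>x\<in>E. \<forall>y\<in>E. \<forall>z\<in>E. le x y \<and> le y z \<longrightarrow> le x z) \<and>
     (\<exists>r\<in>E. \<forall>x\<in>E. le r x) \<and>
     (\<forall>e\<in>E. \<forall>x\<in>E. \<forall>y\<in>E. le x e \<and> le y e \<longrightarrow> le x y \<or> le y x)"

definition tree_root :: "'e set \<Rightarrow> ('e \<Rightarrow> 'e \<Rightarrow> bool) \<Rightarrow> 'e" where
  "tree_root E le = (THE r. r \<in> E \<and> (\<forall>x\<in>E. le r x))"

text \<open>Leaves: maximal edges (every vertex has at least one incoming edge).\<close>
definition leaves :: "'e set \<Rightarrow> ('e \<Rightarrow> 'e \<Rightarrow> bool) \<Rightarrow> 'e set" where
  "leaves E le = {x\<in>E. \<forall>y\<in>E. le x y \<longrightarrow> y = x}"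

text \<open>Edges immediately above x (the incoming edges of the vertex with outgoing edge x).\<close>
definition above :: "'e set \<Rightarrow> ('e \<Rightarrow> 'e \<Rightarrow> bool) \<Rightarrow> 'e \<Rightarrow> 'e set" where
  "above E le x = {y\<in>E. le x y \<and> y \<noteq> x \<and> (\<forall>z\<in>E. le x z \<and> le z y \<longrightarrow> z = x \<or> z = y)}"

definition prod_le :: "('a \<Rightarrow> 'a \<Rightarrow> bool) \<Rightarrow> ('b \<Rightarrow> 'b \<Rightarrow> bool) \<Rightarrow> 'a \<times> 'b \<Rightarrow> 'a \<times> 'b \<Rightarrow> bool" where
  "prod_le leS leT p q \<longleftrightarrow> leS (fst p) (fst q) \<and> leT (snd p) (snd q)"

definition is_shuffle ::
  "'a set \<Rightarrow> ('a \<Rightarrow> 'a \<Rightarrow> bool) \<Rightarrow> 'b set \<Rightarrow> ('b \<Rightarrow> 'b \<Rightarrow> bool) \<Rightarrow>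
   'c set \<Rightarrow> ('c \<Rightarrow> 'c \<Rightarrow> bool) \<Rightarrow> ('c \<Rightarrow> 'a \<times> 'b) \<Rightarrow> bool" where
  "is_shuffle ES leS ET leT EA leA lab \<longleftrightarrow>
     treelike EA leA \<and>
     lab ` EA \<subseteq> ES \<times> ET \<and>
     lab (tree_root EA leA) = (tree_root ES leS, tree_root ET leT) \<and>
     bij_betw lab (leaves EA leA) (leaves ES leS \<times> leaves ET leT) \<and>
     (\<forall>x\<in>EA. x \<notin> leaves EA leA \<longrightarrow>
        bij_betw lab (above EA leA x) ((\<lambda>s'. (s', snd (lab x))) ` above ES leS (fst (lab x))) \<or>
        bij_betw lab (above EA leA x) ((\<lambda>t'. (fst (lab x), t')) ` above ET leT (snd (lab x))))"

definition labelled_iso ::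
  "'c set \<Rightarrow> ('c \<Rightarrow> 'c \<Rightarrow> bool) \<Rightarrow> ('c \<Rightarrow> 'l) \<Rightarrow>
   'd set \<Rightarrow> ('d \<Rightarrow> 'd \<Rightarrow> bool) \<Rightarrow> ('d \<Rightarrow> 'l) \<Rightarrow> bool" where
  "labelled_iso EA leA labA EB leB labB \<longleftrightarrow>
     (\<exists>f. bij_betw f EA EB \<and>
          (\<forall>x\<in>EA. \<forall>y\<in>EA. leA x y \<longleftrightarrow> leB (f x) (f y)) \<and>
          (\<forall>x\<in>EA. labB (f x) = labA x))"

definition shuffle_set_pre ::
  "'a set \<Rightarrow> ('a \<Rightarrow> 'a \<Rightarrow> bool) \<Rightarrow> 'b set \<Rightarrow> ('b \<Rightarrow> 'b \<Rightarrow> bool) \<Rightarrow> ('a \<times> 'b) set \<Rightarrow> bool" where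
  "shuffle_set_pre ES leS ET leT A \<longleftrightarrow>
     A \<subseteq> ES \<times> ET \<and>
     treelike A (prod_le leS leT) \<and>
     leaves A (prod_le leS leT) = leaves ES leS \<times> leaves ET leT"

definition shuffle_set ::
  "'a set \<Rightarrow> ('a \<Rightarrow> 'a \<Rightarrow> bool) \<Rightarrow> 'b set \<Rightarrow> ('b \<Rightarrow> 'b \<Rightarrow> bool) \<Rightarrow> ('a \<times> 'b) set \<Rightarrow> bool" where
  "shuffle_set ES leS ET leT A \<longleftrightarrow>
     shuffle_set_pre ES leS ET leT A \<and>
     (\<forall>B. shuffle_set_pre ES leS ET leT B \<and> A \<subseteq> B \<longrightarrow> B = A)"

end

theory Submission
  imports Defs
begin

text \<open>
  Every step up in a shuffle moves exactly one coordinate one edge up, so the labelling is strictly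
  monotone; since every edge lies below a leaf and the leaves are labelled injectively, edges with
  comparable labels are comparable. Thus the labelling is an order embedding into
  E(S) \<times> E(T): its image satisfies (1) and (2) and determines the shuffle up to isomorphism,
  and it is maximal, because an extra point would have to lie strictly between the labels of an
  edge and of one of its covers, which differ by a single cover in one coordinate.
  Conversely, in a maximal set the covers of a non-leaf (s, t) are either all (s', t) with s'
  covering s or all (s, t') with t' covering t: a missing pair of this form could be added
  without violating (1) or (2). So a maximal set, labelled by the identity, is a shuffle.
\<close>

section \<open>Treelike orders\<close>

lemma aboveD:
  assumes "c \<in> above E le x" shows "c \<in> E" "le x c" "c \<noteq> x"
  using assms unfolding above_def by auto

lemma above_between:
  "c \<in> above E le x \<Longrightarrow> z \<in> E \<Longrightarrow> le x z \<Longrightarrow> le z c \<Longrightarrow> z = x \<or> z = c"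
  unfolding above_def by auto

lemma above_leaf_empty: "x \<in> leaves E le \<Longrightarrow> above E le x = {}"
  unfolding leaves_def above_def by auto

lemma leavesD: "l \<in> leaves E le \<Longrightarrow> y \<in> E \<Longrightarrow> le l y \<Longrightarrow> y = l"
  unfolding leaves_def by auto

lemma above_antichain: "c \<in> above E le x \<Longrightarrow> c' \<in> above E le x \<Longrightarrow> le c c' \<Longrightarrow> c = c'"
  using above_between[of c' E le x c] aboveD[of c E le x] by blast

lemma treelike_image_iff:
  assumes "inj_on f E"
    and le'_iff: "\<And>x y. x \<in> E \<Longrightarrow> y \<in> E \<Longrightarrow> le' (f x) (f y) \<longleftrightarrow> le x y"
  shows "treelike (f ` E) le' \<longleftrightarrow> treelike E le"
  by (simp add: treelike_def le'_iff inj_on_eq_iff[OF assms(1)] finite_image_iff[OF assms(1)])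

lemma leaves_image:
  assumes "inj_on f E"
    and le'_iff: "\<And>x y. x \<in> E \<Longrightarrow> y \<in> E \<Longrightarrow> le' (f x) (f y) \<longleftrightarrow> le x y"
  shows "leaves (f ` E) le' = f ` leaves E le"
  by (auto simp add: leaves_def le'_iff inj_on_eq_iff[OF assms(1)])

locale tree_order =
  fixes E :: "'e set" and le :: "'e \<Rightarrow> 'e \<Rightarrow> bool"
  assumes treelike: "treelike E le"
begin

lemma finite: "finite E"
  and refl: "x \<in> E \<Longrightarrow> le x x"
  and antisym: "x \<in> E \<Longrightarrow> y \<in> E \<Longrightarrow> le x y \<Longrightarrow> le y x \<Longrightarrow> x = y"
  and trans: "x \<in> E \<Longrightarrow> y \<in> E \<Longrightarrow> z \<in> E \<Longrightarrow> le x y \<Longrightarrow> le y z \<Longrightarrow> le x z"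
  and below_linear: "e \<in> E \<Longrightarrow> x \<in> E \<Longrightarrow> y \<in> E \<Longrightarrow> le x e \<Longrightarrow> le y e \<Longrightarrow> le x y \<or> le y x"
  and ex_least: "\<exists>r\<in>E. \<forall>x\<in>E. le r x"
  using treelike unfolding treelike_def by blast+

lemma tree_root_eq: "r \<in> E \<Longrightarrow> \<forall>x\<in>E. le r x \<Longrightarrow> tree_root E le = r"
  unfolding tree_root_def by (rule the_equality) (use antisym in blast)+

lemma tree_root_in: "tree_root E le \<in> E"
  and tree_root_le: "x \<in> E \<Longrightarrow> le (tree_root E le) x"
proof -
  obtain r where r: "r \<in> E" "\<forall>x\<in>E. le r x" using ex_least by blast
  show "tree_root E le \<in> E" "x \<in> E \<Longrightarrow> le (tree_root E le) x"
    using tree_root_eq[OF r] r by auto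
qed

lemma card_upset_less:
  assumes "x \<in> E" "y \<in> E" "le x y" "y \<noteq> x"
  shows "card {z\<in>E. le y z \<and> z \<noteq> y} < card {z\<in>E. le x z \<and> z \<noteq> x}"
proof (rule psubset_card_mono)
  show "finite {z\<in>E. le x z \<and> z \<noteq> x}" using finite by simp
  have "{z\<in>E. le y z \<and> z \<noteq> y} \<subseteq> {z\<in>E. le x z \<and> z \<noteq> x}"
    using assms trans antisym by blast
  moreover have "y \<in> {z\<in>E. le x z \<and> z \<noteq> x}" "y \<notin> {z\<in>E. le y z \<and> z \<noteq> y}"
    using assms by auto
  ultimately show "{z\<in>E. le y z \<and> z \<noteq> y} \<subset> {z\<in>E. le x z \<and> z \<noteq> x}" by blast
qed

lemma card_downset_less:
  assumes "x \<in> E" "y \<in> E" "le x y" "y \<noteq> x"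
  shows "card {z\<in>E. le z x \<and> z \<noteq> x} < card {z\<in>E. le z y \<and> z \<noteq> y}"
proof (rule psubset_card_mono)
  show "finite {z\<in>E. le z y \<and> z \<noteq> y}" using finite by simp
  have "{z\<in>E. le z x \<and> z \<noteq> x} \<subseteq> {z\<in>E. le z y \<and> z \<noteq> y}"
    using assms trans antisym by blast
  moreover have "x \<in> {z\<in>E. le z y \<and> z \<noteq> y}" "x \<notin> {z\<in>E. le z x \<and> z \<noteq> x}"
    using assms by auto
  ultimately show "{z\<in>E. le z x \<and> z \<noteq> x} \<subset> {z\<in>E. le z y \<and> z \<noteq> y}" by blast
qed

lemma up_induct[consumes 1, case_names step]:
  assumes "x \<in> E"
    and "\<And>x. x \<in> E \<Longrightarrow> (\<And>y. y \<in> E \<Longrightarrow> le x y \<Longrightarrow> y \<noteq> x \<Longrightarrow> P y) \<Longrightarrow> P x"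
  shows "P x"
  using assms(1)
proof (induction "card {z\<in>E. le x z \<and> z \<noteq> x}" arbitrary: x rule: less_induct)
  case less
  then show ?case using assms(2) card_upset_less by blast
qed

lemma down_induct[consumes 1, case_names step]:
  assumes "x \<in> E"
    and "\<And>x. x \<in> E \<Longrightarrow> (\<And>y. y \<in> E \<Longrightarrow> le y x \<Longrightarrow> y \<noteq> x \<Longrightarrow> P y) \<Longrightarrow> P x"
  shows "P x"
  using assms(1)
proof (induction "card {z\<in>E. le z x \<and> z \<noteq> x}" arbitrary: x rule: less_induct)
  case less
  then show ?case using assms(2) card_downset_less by blast
qed

lemma ex_maximal:
  assumes "D \<subseteq> E" "d \<in> D"
  shows "\<exists>a\<in>D. \<forall>y\<in>D. le a y \<longrightarrow> y = a"
proof -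
  have "d \<in> E" using assms by blast
  then show ?thesis using assms(2)
  proof (induction d rule: up_induct)
    case (step d)
    show ?case
    proof (cases "\<exists>y\<in>D. le d y \<and> y \<noteq> d")
      case True
      then obtain y where "y \<in> D" "le d y" "y \<noteq> d" by blast
      then show ?thesis using step.IH assms(1) by blast
    qed (use step.prems in blast)
  qed
qed

lemma ex_above_below:
  assumes "x \<in> E" "y \<in> E" "le x y" "y \<noteq> x"
  shows "\<exists>c\<in>above E le x. le c y"
  using assms(2-4)
proof (induction y rule: down_induct)
  case (step y)
  show ?case
  proof (cases "y \<in> above E le x")
    case False
    then obtain z where z: "z \<in> E" "le x z" "le z y" "z \<noteq> x" "z \<noteq> y"
      using False step.hyps step.prems unfolding above_def by blast
    then obtain c where c: "c \<in> above E le x" "le c z" using step.IH by blast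
    then show ?thesis using trans[OF aboveD(1)[OF c(1)] z(1) step.hyps c(2) z(3)] by blast
  qed (use refl step.hyps in blast)
qed

lemma ex_above_below_iff:
  assumes "x \<in> E" "y \<in> E" "le x y"
  shows "(\<exists>c\<in>above E le x. le c y) \<longleftrightarrow> y \<noteq> x"
proof
  assume "\<exists>c\<in>above E le x. le c y"
  then obtain c where c: "c \<in> above E le x" "le c y" by blast
  show "y \<noteq> x" using aboveD[OF c(1)] c(2) antisym[OF assms(1)] by blast
qed (use ex_above_below[OF assms] in blast)

lemma ex_leaf_above: "x \<in> E \<Longrightarrow> \<exists>l\<in>leaves E le. le x l"
proof (induction x rule: up_induct)
  case (step x)
  show ?case
  proof (cases "x \<in> leaves E le")
    case False
    then obtain y where y: "y \<in> E" "le x y" "y \<noteq> x" using step.hyps unfolding leaves_def by blast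
    then obtain l where "l \<in> leaves E le" "le y l" using step.IH by blast
    then show ?thesis using trans[OF step.hyps y(1) _ y(2)] unfolding leaves_def by blast
  qed (use refl step.hyps in blast)
qed

lemma above_nonempty:
  assumes "x \<in> E" "x \<notin> leaves E le" shows "above E le x \<noteq> {}"
proof -
  obtain l where l: "l \<in> leaves E le" "le x l" using ex_leaf_above[OF assms(1)] by blast
  then have "l \<in> E" "l \<noteq> x" using assms(2) unfolding leaves_def by auto
  then show ?thesis using ex_above_below[OF assms(1) _ l(2)] by blast
qed

lemma above_eq_if_common_upper:
  assumes "c \<in> above E le x" "c' \<in> above E le x" "w \<in> E" "le c w" "le c' w"
  shows "c = c'"
proof -
  have "le c c' \<or> le c' c"
    using below_linear[OF assms(3) aboveD(1)[OF assms(1)] aboveD(1)[OF assms(2)] assms(4,5)] .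
  then show ?thesis
    using above_between[OF assms(1)] above_between[OF assms(2)]
      aboveD[OF assms(1)] aboveD[OF assms(2)] by blast
qed

lemma ex_above_below_leaf:
  assumes "x \<in> E" "above E le x \<noteq> {}" "l \<in> leaves E le" "le x l"
  shows "\<exists>c\<in>above E le x. le c l"
proof -
  have "l \<noteq> x" using above_leaf_empty[OF assms(3)] assms(2) by blast
  moreover have "l \<in> E" using assms(3) unfolding leaves_def by blast
  ultimately show ?thesis using ex_above_below assms(1,4) by blast
qed

end

section \<open>Pairs of trees\<close>

text \<open>The two admissible label sets for the incoming edges of a vertex whose outgoing edge is
  labelled p, as in clause (3) of the definition of a shuffle.\<close>

definition covers_fst :: "'a set \<Rightarrow> ('a \<Rightarrow> 'a \<Rightarrow> bool) \<Rightarrow> 'a \<times> 'b \<Rightarrow> ('a \<times> 'b) set" where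
  "covers_fst ES leS p = (\<lambda>s'. (s', snd p)) ` above ES leS (fst p)"

definition covers_snd :: "'b set \<Rightarrow> ('b \<Rightarrow> 'b \<Rightarrow> bool) \<Rightarrow> 'a \<times> 'b \<Rightarrow> ('a \<times> 'b) set" where
  "covers_snd ET leT p = (\<lambda>t'. (fst p, t')) ` above ET leT (snd p)"

lemma is_shuffle_iff:
  "is_shuffle ES leS ET leT EA leA lab \<longleftrightarrow>
     treelike EA leA \<and>
     lab ` EA \<subseteq> ES \<times> ET \<and>
     lab (tree_root EA leA) = (tree_root ES leS, tree_root ET leT) \<and>
     bij_betw lab (leaves EA leA) (leaves ES leS \<times> leaves ET leT) \<and>
     (\<forall>x\<in>EA. x \<notin> leaves EA leA \<longrightarrow>
        bij_betw lab (above EA leA x) (covers_fst ES leS (lab x)) \<or>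
        bij_betw lab (above EA leA x) (covers_snd ET leT (lab x)))"
  unfolding is_shuffle_def covers_fst_def covers_snd_def ..

locale tree_pair = S: tree_order ES leS + T: tree_order ET leT
  for ES :: "'a set" and leS and ET :: "'b set" and leT
begin

abbreviation le_pair :: "'a \<times> 'b \<Rightarrow> 'a \<times> 'b \<Rightarrow> bool" where
  "le_pair \<equiv> prod_le leS leT"

abbreviation leaf_pairs :: "('a \<times> 'b) set" where
  "leaf_pairs \<equiv> leaves ES leS \<times> leaves ET leT"

abbreviation root_pair :: "'a \<times> 'b" where
  "root_pair \<equiv> (tree_root ES leS, tree_root ET leT)"

lemma le_pair_refl: "p \<in> ES \<times> ET \<Longrightarrow> le_pair p p"
  unfolding prod_le_def using S.refl T.refl by (cases p) simp

lemma le_pair_antisym: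
  assumes "p \<in> ES \<times> ET" "q \<in> ES \<times> ET" "le_pair p q" "le_pair q p" shows "p = q"
  using assms S.antisym[of "fst p" "fst q"] T.antisym[of "snd p" "snd q"]
  unfolding prod_le_def by (simp add: mem_Times_iff prod_eq_iff)

lemma le_pair_trans:
  assumes "p \<in> ES \<times> ET" "q \<in> ES \<times> ET" "r \<in> ES \<times> ET" "le_pair p q" "le_pair q r"
  shows "le_pair p r"
  using assms S.trans[of "fst p" "fst q" "fst r"] T.trans[of "snd p" "snd q" "snd r"]
  unfolding prod_le_def by (simp add: mem_Times_iff)

lemma root_pair_in: "root_pair \<in> ES \<times> ET"
  using S.tree_root_in T.tree_root_in by simp

lemma root_pair_le: "q \<in> ES \<times> ET \<Longrightarrow> le_pair root_pair q"
  unfolding prod_le_def using S.tree_root_le T.tree_root_le by (simp add: mem_Times_iff)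

lemma leaf_pairs_subset: "leaf_pairs \<subseteq> ES \<times> ET"
  unfolding leaves_def by auto

lemma leaf_pairs_maximal:
  assumes "p \<in> leaf_pairs" "q \<in> ES \<times> ET" "le_pair p q" shows "q = p"
  using assms leavesD[of "fst p" ES leS "fst q"] leavesD[of "snd p" ET leT "snd q"]
  unfolding prod_le_def by (simp add: mem_Times_iff prod_eq_iff)

lemma ex_leaf_pair_above:
  assumes "q \<in> ES \<times> ET" shows "\<exists>p\<in>leaf_pairs. le_pair q p"
proof -
  have "fst q \<in> ES" "snd q \<in> ET" using assms by auto
  then obtain l m where "l \<in> leaves ES leS" "leS (fst q) l" "m \<in> leaves ET leT" "leT (snd q) m"
    using S.ex_leaf_above T.ex_leaf_above by meson
  then show ?thesis unfolding prod_le_def by force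
qed

definition coordinate_covers :: "'a \<times> 'b \<Rightarrow> ('a \<times> 'b) set \<Rightarrow> bool" where
  "coordinate_covers p C \<longleftrightarrow> C = covers_fst ES leS p \<or> C = covers_snd ET leT p"

lemma coordinate_covers_cases:
  assumes "coordinate_covers p C" "q \<in> C"
  obtains s' where "s' \<in> above ES leS (fst p)" "q = (s', snd p)"
    | t' where "t' \<in> above ET leT (snd p)" "q = (fst p, t')"
  using assms unfolding coordinate_covers_def covers_fst_def covers_snd_def by auto

lemma coordinate_covers_subset_above:
  assumes "coordinate_covers p C" "p \<in> ES \<times> ET"
  shows "C \<subseteq> above (ES \<times> ET) le_pair p"
proof
  fix q assume "q \<in> C"
  then show "q \<in> above (ES \<times> ET) le_pair p"
  proof (rule coordinate_covers_cases[OF assms(1)])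
    fix s' assume s': "s' \<in> above ES leS (fst p)" "q = (s', snd p)"
    show ?thesis
      unfolding above_def prod_le_def s'(2)
      using aboveD[OF s'(1)] above_between[OF s'(1)] assms(2) T.refl T.antisym
      by (auto simp: mem_Times_iff prod_eq_iff)
  next
    fix t' assume t': "t' \<in> above ET leT (snd p)" "q = (fst p, t')"
    show ?thesis
      unfolding above_def prod_le_def t'(2)
      using aboveD[OF t'(1)] above_between[OF t'(1)] assms(2) S.refl S.antisym
      by (auto simp: mem_Times_iff prod_eq_iff)
  qed
qed

lemma coordinate_covers_eq_if_common_upper:
  assumes "coordinate_covers p C" "q \<in> C" "q' \<in> C"
    and "w \<in> ES \<times> ET" "le_pair q w" "le_pair q' w"
  shows "q = q'"
  using assms(1) unfolding coordinate_covers_def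
proof
  assume "C = covers_fst ES leS p"
  then obtain c c' where "c \<in> above ES leS (fst p)" "c' \<in> above ES leS (fst p)"
      "q = (c, snd p)" "q' = (c', snd p)"
    using assms(2,3) unfolding covers_fst_def by auto
  then show ?thesis
    using S.above_eq_if_common_upper[of c "fst p" c' "fst w"] assms(4-6)
    unfolding prod_le_def by auto
next
  assume "C = covers_snd ET leT p"
  then obtain c c' where "c \<in> above ET leT (snd p)" "c' \<in> above ET leT (snd p)"
      "q = (fst p, c)" "q' = (fst p, c')"
    using assms(2,3) unfolding covers_snd_def by auto
  then show ?thesis
    using T.above_eq_if_common_upper[of c "snd p" c' "snd w"] assms(4-6)
    unfolding prod_le_def by auto
qed

lemma coordinate_covers_ex_below_leaf:
  assumes "coordinate_covers p C" "p \<in> ES \<times> ET" "C \<noteq> {}"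
    and "l \<in> leaf_pairs" "le_pair p l"
  shows "\<exists>q\<in>C. le_pair q l"
  using assms(1) unfolding coordinate_covers_def
proof
  assume C: "C = covers_fst ES leS p"
  then have "above ES leS (fst p) \<noteq> {}" using assms(3) unfolding covers_fst_def by auto
  then obtain c where "c \<in> above ES leS (fst p)" "leS c (fst l)"
    using S.ex_above_below_leaf[of "fst p" "fst l"] assms(2,4,5)
    unfolding prod_le_def by (auto simp: mem_Times_iff)
  then show ?thesis using C assms(5) unfolding covers_fst_def prod_le_def by auto
next
  assume C: "C = covers_snd ET leT p"
  then have "above ET leT (snd p) \<noteq> {}" using assms(3) unfolding covers_snd_def by auto
  then obtain c where "c \<in> above ET leT (snd p)" "leT c (snd l)"
    using T.ex_above_below_leaf[of "snd p" "snd l"] assms(2,4,5)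
    unfolding prod_le_def by (auto simp: mem_Times_iff)
  then show ?thesis using C assms(5) unfolding covers_snd_def prod_le_def by auto
qed

lemma ex_covers_fst_below_iff:
  assumes "p \<in> ES \<times> ET" "q \<in> ES \<times> ET" "le_pair p q"
  shows "(\<exists>z\<in>covers_fst ES leS p. le_pair z q) \<longleftrightarrow> fst q \<noteq> fst p"
  using S.ex_above_below_iff[of "fst p" "fst q"] assms
  unfolding covers_fst_def prod_le_def by (auto simp: mem_Times_iff)

lemma ex_covers_snd_below_iff:
  assumes "p \<in> ES \<times> ET" "q \<in> ES \<times> ET" "le_pair p q"
  shows "(\<exists>z\<in>covers_snd ET leT p. le_pair z q) \<longleftrightarrow> snd q \<noteq> snd p"
  using T.ex_above_below_iff[of "snd p" "snd q"] assms
  unfolding covers_snd_def prod_le_def by (auto simp: mem_Times_iff)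

end

section \<open>Shuffles embed into the product\<close>

locale shuffle = tree_pair ES leS ET leT
  for ES :: "'a set" and leS and ET :: "'b set" and leT +
  fixes EA :: "'c set" and leA :: "'c \<Rightarrow> 'c \<Rightarrow> bool" and lab :: "'c \<Rightarrow> 'a \<times> 'b"
  assumes is_shuffle: "is_shuffle ES leS ET leT EA leA lab"
begin

sublocale A: tree_order EA leA
  using is_shuffle unfolding is_shuffle_def by unfold_locales blast

lemma lab_in: "x \<in> EA \<Longrightarrow> lab x \<in> ES \<times> ET"
  using is_shuffle unfolding is_shuffle_def by blast

lemma lab_tree_root: "lab (tree_root EA leA) = root_pair"
  using is_shuffle unfolding is_shuffle_def by blast

lemma bij_betw_lab_leaves: "bij_betw lab (leaves EA leA) leaf_pairs"
  using is_shuffle unfolding is_shuffle_def by blast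

lemma lab_leaves: "lab ` leaves EA leA = leaf_pairs"
  using bij_betw_lab_leaves by (rule bij_betw_imp_surj_on)

lemma ex_bij_betw_above:
  assumes "x \<in> EA" "x \<notin> leaves EA leA"
  obtains C where "coordinate_covers (lab x) C" "bij_betw lab (above EA leA x) C"
  using is_shuffle assms unfolding is_shuffle_iff coordinate_covers_def by blast

lemma lab_in_above:
  assumes "x \<in> EA" "c \<in> above EA leA x"
  shows "lab c \<in> above (ES \<times> ET) le_pair (lab x)"
proof -
  have "x \<notin> leaves EA leA" using above_leaf_empty[of x EA leA] assms(2) by auto
  then obtain C where C: "coordinate_covers (lab x) C" "bij_betw lab (above EA leA x) C"
    using ex_bij_betw_above assms(1) by blast
  have "lab c \<in> C" using bij_betw_imp_surj_on[OF C(2)] assms(2) by blast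
  then show ?thesis using coordinate_covers_subset_above[OF C(1) lab_in[OF assms(1)]] by blast
qed

lemma lab_strict_mono:
  assumes "x \<in> EA" "y \<in> EA" "leA x y" "y \<noteq> x"
  shows "le_pair (lab x) (lab y) \<and> lab y \<noteq> lab x"
  using assms
proof (induction x arbitrary: y rule: A.up_induct)
  case (step x)
  obtain c where c: "c \<in> above EA leA x" "leA c y"
    using A.ex_above_below step.hyps step.prems by blast
  note c_in = aboveD[OF c(1)]
  have xc: "le_pair (lab x) (lab c)" "lab c \<noteq> lab x"
    using aboveD[OF lab_in_above[OF step.hyps c(1)]] by auto
  show ?case
  proof (cases "c = y")
    case False
    then have cy: "le_pair (lab c) (lab y)" "lab y \<noteq> lab c"
      using step.IH[OF c_in(1,2,3) step.prems(1) c(2)] by auto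
    have "le_pair (lab x) (lab y)"
      using le_pair_trans[OF lab_in lab_in lab_in] step.hyps c_in(1) step.prems(1) xc(1) cy(1)
      by blast
    moreover have "lab y \<noteq> lab x"
    proof
      assume "lab y = lab x"
      then have "lab c = lab x"
        using le_pair_antisym[OF lab_in lab_in] step.hyps c_in(1) xc(1) cy(1) by simp
      then show False using xc(2) by blast
    qed
    ultimately show ?thesis by blast
  qed (use xc in simp)
qed

lemma lab_mono: "x \<in> EA \<Longrightarrow> y \<in> EA \<Longrightarrow> leA x y \<Longrightarrow> le_pair (lab x) (lab y)"
  using lab_strict_mono[of x y] le_pair_refl[OF lab_in, of x] by (cases "x = y") simp_all

lemma ex_leaf_above_lab:
  assumes "x \<in> EA" "p \<in> leaf_pairs" "le_pair (lab x) p"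
  shows "\<exists>l\<in>leaves EA leA. leA x l \<and> lab l = p"
  using assms
proof (induction x rule: A.up_induct)
  case (step x)
  show ?case
  proof (cases "x \<in> leaves EA leA")
    case True
    then have "lab x \<in> leaf_pairs" using lab_leaves by blast
    then have "p = lab x"
      by (rule leaf_pairs_maximal[OF _ subsetD[OF leaf_pairs_subset step.prems(1)] step.prems(2)])
    then show ?thesis using True A.refl[OF step.hyps] by blast
  next
    case False
    then obtain C where C: "coordinate_covers (lab x) C" "bij_betw lab (above EA leA x) C"
      using ex_bij_betw_above step.hyps by blast
    have "C \<noteq> {}"
      using A.above_nonempty[OF step.hyps False] bij_betw_imp_surj_on[OF C(2)] by blast
    then obtain q where "q \<in> C" "le_pair q p"
      using coordinate_covers_ex_below_leaf[OF C(1) lab_in[OF step.hyps]] step.prems by blast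
    then obtain c where c: "c \<in> above EA leA x" "le_pair (lab c) p"
      using bij_betw_imp_surj_on[OF C(2)] by blast
    note c_in = aboveD[OF c(1)]
    obtain l where "l \<in> leaves EA leA" "leA c l" "lab l = p"
      using step.IH[OF c_in step.prems(1) c(2)] by blast
    then show ?thesis using A.trans[OF step.hyps c_in(1) _ c_in(2)] unfolding leaves_def by blast
  qed
qed

lemma le_iff_le_pair:
  assumes "x \<in> EA" "y \<in> EA"
  shows "leA x y \<longleftrightarrow> le_pair (lab x) (lab y)"
proof
  assume xy: "le_pair (lab x) (lab y)"
  obtain p where p: "p \<in> leaf_pairs" "le_pair (lab y) p"
    using ex_leaf_pair_above[OF lab_in[OF assms(2)]] by blast
  have "le_pair (lab x) p"
    using le_pair_trans[OF lab_in[OF assms(1)] lab_in[OF assms(2)] _ xy p(2)] p(1) leaf_pairs_subset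
    by blast
  then obtain l where l: "l \<in> leaves EA leA" "leA x l" "lab l = p"
    using ex_leaf_above_lab[OF assms(1) p(1)] by blast
  obtain l' where l': "l' \<in> leaves EA leA" "leA y l'" "lab l' = p"
    using ex_leaf_above_lab[OF assms(2) p] by blast
  have "l' = l"
    using inj_onD[OF bij_betw_imp_inj_on[OF bij_betw_lab_leaves], of l' l] l l' by simp
  then have "leA x y \<or> leA y x"
    using A.below_linear[OF _ assms] l l' unfolding leaves_def by blast
  moreover have "x = y" if "leA y x"
  proof (rule ccontr)
    assume "x \<noteq> y"
    then have "le_pair (lab y) (lab x)" "lab x \<noteq> lab y"
      using lab_strict_mono[OF assms(2,1) that] by auto
    then show False using le_pair_antisym[OF lab_in[OF assms(1)] lab_in[OF assms(2)] xy] by simp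
  qed
  ultimately show "leA x y" using A.refl[OF assms(1)] by blast
qed (use lab_mono assms in blast)

lemma inj_on_lab: "inj_on lab EA"
proof (rule inj_onI)
  fix x y assume "x \<in> EA" "y \<in> EA" "lab x = lab y"
  then have "leA x y" "leA y x" using le_iff_le_pair le_pair_refl[OF lab_in] by simp_all
  then show "x = y" using A.antisym \<open>x \<in> EA\<close> \<open>y \<in> EA\<close> by blast
qed

lemma shuffle_set_pre_image: "shuffle_set_pre ES leS ET leT (lab ` EA)"
proof -
  have "treelike (lab ` EA) le_pair"
    using treelike_image_iff[OF inj_on_lab, of le_pair leA] le_iff_le_pair A.treelike by simp
  moreover have "leaves (lab ` EA) le_pair = leaf_pairs"
    using leaves_image[OF inj_on_lab, of le_pair leA] le_iff_le_pair lab_leaves by simp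
  moreover have "lab ` EA \<subseteq> ES \<times> ET" using lab_in by blast
  ultimately show ?thesis unfolding shuffle_set_pre_def by blast
qed

text \<open>For every cover y of a, lab y covers lab a in the product order, so no point of B lies
  strictly between them.\<close>

lemma eq_lab_if_maximal_below:
  assumes B: "shuffle_set_pre ES leS ET leT B" and sub: "lab ` EA \<subseteq> B" and b: "b \<in> B"
    and a: "a \<in> EA" "le_pair (lab a) b"
    and a_max: "\<forall>y\<in>EA. leA a y \<and> le_pair (lab y) b \<longrightarrow> y = a"
  shows "b = lab a"
proof (rule ccontr)
  assume b_ne: "b \<noteq> lab a"
  have B_sub: "B \<subseteq> ES \<times> ET" and "treelike B le_pair" and B_leaves: "leaves B le_pair = leaf_pairs"
    using B unfolding shuffle_set_pre_def by auto
  then interpret B: tree_order B le_pair by unfold_locales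
  have b_in: "b \<in> ES \<times> ET" using B_sub b by blast
  obtain q where q: "q \<in> leaves B le_pair" "le_pair b q" using B.ex_leaf_above[OF b] by blast
  have q_in: "q \<in> B" "q \<in> leaf_pairs" using q(1) B_leaves unfolding leaves_def by auto
  have "le_pair (lab a) q" using B.trans[OF _ b q_in(1) a(2) q(2)] sub a(1) by blast
  then obtain l where l: "l \<in> leaves EA leA" "leA a l" "lab l = q"
    using ex_leaf_above_lab[OF a(1) q_in(2)] by blast
  have "q \<noteq> lab a"
  proof
    assume "q = lab a"
    then show False using leaf_pairs_maximal[OF _ b_in a(2)] q_in(2) b_ne by simp
  qed
  then obtain y where y: "y \<in> above EA leA a" "leA y l"
    using A.ex_above_below[OF a(1) _ l(2)] l unfolding leaves_def by auto
  note y_in = aboveD[OF y(1)]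
  have "le_pair (lab y) q" using lab_mono[OF y_in(1) _ y(2)] l unfolding leaves_def by auto
  then have "le_pair (lab y) b \<or> le_pair b (lab y)"
    using B.below_linear[OF q_in(1) _ b] q(2) sub y_in(1) by blast
  moreover have y_not_below: "\<not> le_pair (lab y) b" using a_max y_in by blast
  ultimately have "le_pair b (lab y)" by blast
  then have "b = lab y" using above_between[OF lab_in_above[OF a(1) y(1)] b_in a(2)] b_ne by blast
  then show False using y_not_below le_pair_refl[OF b_in] by simp
qed

lemma shuffle_set_pre_superset_eq:
  assumes B: "shuffle_set_pre ES leS ET leT B" and sub: "lab ` EA \<subseteq> B"
  shows "B = lab ` EA"
proof
  show "B \<subseteq> lab ` EA"
  proof
    fix b assume b: "b \<in> B"
    have "b \<in> ES \<times> ET" using B b unfolding shuffle_set_pre_def by blast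
    define D where "D = {x \<in> EA. le_pair (lab x) b}"
    have "tree_root EA leA \<in> D"
      unfolding D_def using A.tree_root_in lab_tree_root root_pair_le[OF \<open>b \<in> ES \<times> ET\<close>] by simp
    then obtain a where "a \<in> D" "\<forall>y\<in>D. leA a y \<longrightarrow> y = a"
      using A.ex_maximal[of D] unfolding D_def by blast
    then have "b = lab a" using eq_lab_if_maximal_below[OF B sub b] unfolding D_def by blast
    then show "b \<in> lab ` EA" using \<open>a \<in> D\<close> unfolding D_def by blast
  qed
qed (rule sub)

lemma shuffle_set_image: "shuffle_set ES leS ET leT (lab ` EA)"
  unfolding shuffle_set_def using shuffle_set_pre_image shuffle_set_pre_superset_eq by blast

end

section \<open>Maximal shuffle sets\<close>

context tree_pair begin

lemma treelike_insert:
  assumes A: "treelike A le_pair" "A \<subseteq> ES \<times> ET" and z: "z \<in> ES \<times> ET"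
    and z_below: "a \<in> A" "le_pair z a"
    and z_root: "(\<forall>x\<in>A. le_pair z x) \<or> (\<exists>x\<in>A. le_pair x z)"
    and z_linear: "\<forall>u\<in>A. \<forall>w\<in>A. le_pair z w \<and> le_pair u w \<longrightarrow> le_pair u z \<or> le_pair z u"
  shows "treelike (insert z A) le_pair"
proof -
  interpret A: tree_order A le_pair by (rule tree_order.intro) (rule A(1))
  have in_prod: "x \<in> ES \<times> ET" if "x \<in> insert z A" for x
    using that A(2) z by blast
  have below_linear: "le_pair x y \<or> le_pair y x"
    if e: "e \<in> insert z A" and xy: "x \<in> insert z A" "y \<in> insert z A"
      and le: "le_pair x e" "le_pair y e" for e x y
  proof -
    obtain e' where e': "e' \<in> A" "le_pair e e'"
    proof (cases "e = z")
      case False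
      then show thesis using e A.refl[of e] that by blast
    qed (use z_below in blast)
    have "le_pair x e'" "le_pair y e'"
      using le_pair_trans[OF in_prod in_prod in_prod _ e'(2)] e xy le e'(1) by blast+
    then show ?thesis
      using A.below_linear[OF e'(1)] z_linear e'(1) xy le_pair_refl[OF z] by blast
  qed
  show ?thesis
    unfolding treelike_def
  proof (intro conjI ballI impI)
    show "finite (insert z A)" using A.finite by blast
    show "\<exists>r\<in>insert z A. \<forall>x\<in>insert z A. le_pair r x"
      using z_root
    proof
      assume "\<exists>x\<in>A. le_pair x z"
      then obtain x where "x \<in> A" "le_pair x z" by blast
      then have "le_pair (tree_root A le_pair) z"
        using le_pair_trans[OF in_prod in_prod z A.tree_root_le] A.tree_root_in by blast
      then show ?thesis using A.tree_root_in A.tree_root_le by blast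
    qed (use le_pair_refl[OF z] in blast)
  next
    fix x assume "x \<in> insert z A"
    then show "le_pair x x" using le_pair_refl in_prod by blast
  next
    fix x y assume "x \<in> insert z A" "y \<in> insert z A" "le_pair x y \<and> le_pair y x"
    then show "x = y" using le_pair_antisym[OF in_prod in_prod] by blast
  next
    fix x y w assume "x \<in> insert z A" "y \<in> insert z A" "w \<in> insert z A"
      "le_pair x y \<and> le_pair y w"
    then show "le_pair x w" using le_pair_trans[OF in_prod in_prod in_prod] by blast
  qed (use below_linear in blast)
qed

lemma shuffle_set_pre_insert:
  assumes pre: "shuffle_set_pre ES leS ET leT A" and z: "z \<in> ES \<times> ET"
    and z_below: "a \<in> A" "le_pair z a"
    and z_root: "(\<forall>x\<in>A. le_pair z x) \<or> (\<exists>x\<in>A. le_pair x z)"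
    and z_linear: "\<forall>u\<in>A. \<forall>w\<in>A. le_pair z w \<and> le_pair u w \<longrightarrow> le_pair u z \<or> le_pair z u"
  shows "shuffle_set_pre ES leS ET leT (insert z A)"
proof -
  have A_sub: "A \<subseteq> ES \<times> ET" and A_tree: "treelike A le_pair"
    and A_leaves: "leaves A le_pair = leaf_pairs"
    using pre unfolding shuffle_set_pre_def by auto
  have zA_sub: "insert z A \<subseteq> ES \<times> ET" using A_sub z by blast
  have "z \<notin> leaves (insert z A) le_pair" if "z \<notin> A"
    using that z_below unfolding leaves_def by blast
  then have "leaves (insert z A) le_pair = leaf_pairs"
    using A_leaves leaf_pairs_maximal zA_sub unfolding leaves_def by blast
  then show ?thesis
    using treelike_insert[OF A_tree A_sub z z_below z_root z_linear] zA_sub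
    unfolding shuffle_set_pre_def by blast
qed

end

locale maximal_shuffle_set = tree_pair ES leS ET leT
  for ES :: "'a set" and leS and ET :: "'b set" and leT +
  fixes A :: "('a \<times> 'b) set"
  assumes shuffle_set: "shuffle_set ES leS ET leT A"
begin

lemma subset_prod: "A \<subseteq> ES \<times> ET"
  and leaves_eq: "leaves A le_pair = leaf_pairs"
  and treelike_A: "treelike A le_pair"
  using shuffle_set unfolding shuffle_set_def shuffle_set_pre_def by auto

sublocale A: tree_order A le_pair
  by (rule tree_order.intro) (rule treelike_A)

lemma mem_if_insertable:
  assumes "z \<in> ES \<times> ET" "a \<in> A" "le_pair z a"
    and "(\<forall>x\<in>A. le_pair z x) \<or> (\<exists>x\<in>A. le_pair x z)"
    and "\<forall>u\<in>A. \<forall>w\<in>A. le_pair z w \<and> le_pair u w \<longrightarrow> le_pair u z \<or> le_pair z u"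
  shows "z \<in> A"
proof -
  have "shuffle_set_pre ES leS ET leT (insert z A)"
    using shuffle_set_pre_insert[OF _ assms] shuffle_set unfolding shuffle_set_def by blast
  then show ?thesis using shuffle_set unfolding shuffle_set_def by blast
qed

lemma in_prod: "x \<in> A \<Longrightarrow> x \<in> ES \<times> ET"
  using subset_prod by blast

lemma root_pair_le_A: "\<forall>x\<in>A. le_pair root_pair x"
  using root_pair_le[OF in_prod] by blast

lemma root_pair_mem: "root_pair \<in> A"
  using mem_if_insertable[OF root_pair_in A.tree_root_in
      root_pair_le[OF in_prod[OF A.tree_root_in]]]
    root_pair_le_A by blast

lemma tree_root_A: "tree_root A le_pair = root_pair"
  using A.tree_root_eq[OF root_pair_mem root_pair_le_A] .

lemma coordinate_cover_comparable:
  assumes x: "x \<in> A" and C: "coordinate_covers x C"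
    and above_C: "\<forall>y\<in>above A le_pair x. \<exists>z\<in>C. le_pair z y"
    and z: "z \<in> C" and u: "u \<in> A" and w: "w \<in> A" "le_pair z w" "le_pair u w"
  shows "le_pair u z \<or> le_pair z u"
proof -
  have C_in: "z' \<in> ES \<times> ET" "le_pair x z'" if "z' \<in> C" for z'
    using aboveD[OF subsetD[OF coordinate_covers_subset_above[OF C in_prod[OF x]] that]] by auto
  have "le_pair x w"
    using le_pair_trans[OF in_prod[OF x] C_in(1)[OF z] in_prod[OF w(1)] C_in(2)[OF z] w(2)] .
  then consider "le_pair u x" | "u = x" | "le_pair x u" "u \<noteq> x"
    using A.below_linear[OF w(1) u x w(3)] by blast
  then show ?thesis
  proof cases
    case 1
    then show ?thesis
      using le_pair_trans[OF in_prod[OF u] in_prod[OF x] C_in(1)[OF z] _ C_in(2)[OF z]] by blast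
  next
    case 3
    then obtain y where y: "y \<in> above A le_pair x" "le_pair y u"
      using A.ex_above_below[OF x u] by blast
    note y_in = in_prod[OF aboveD(1)[OF y(1)]]
    obtain z' where z': "z' \<in> C" "le_pair z' y" using above_C y(1) by blast
    have "le_pair y w" using le_pair_trans[OF y_in in_prod[OF u] in_prod[OF w(1)] y(2) w(3)] .
    then have "le_pair z' w"
      using le_pair_trans[OF C_in(1)[OF z'(1)] y_in in_prod[OF w(1)] z'(2)] by blast
    then have "z' = z"
      using coordinate_covers_eq_if_common_upper[OF C z'(1) z in_prod[OF w(1)] _ w(2)] by blast
    then show ?thesis using le_pair_trans[OF C_in(1)[OF z] y_in in_prod[OF u] _ y(2)] z'(2) by blast
  qed (use C_in(2)[OF z] in blast)
qed

text \<open>Maximality at work: a coordinate cover below a cover of x in A can be inserted into A,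
  so it already is that cover.\<close>

lemma above_subset_coordinate_covers:
  assumes x: "x \<in> A" and C: "coordinate_covers x C"
    and above_C: "\<forall>y\<in>above A le_pair x. \<exists>z\<in>C. le_pair z y"
  shows "above A le_pair x \<subseteq> C"
proof
  fix y assume y: "y \<in> above A le_pair x"
  obtain z where z: "z \<in> C" "le_pair z y" using above_C y by blast
  note z_in = aboveD[OF subsetD[OF coordinate_covers_subset_above[OF C in_prod[OF x]] z(1)]]
  have "z \<in> A"
    using mem_if_insertable[OF z_in(1) aboveD(1)[OF y] z(2)] x z_in(2)
      coordinate_cover_comparable[OF x C above_C z(1)] by blast
  then have "z = y" using above_between[OF y _ z_in(2) z(2)] z_in(3) by blast
  then show "y \<in> C" using z(1) by blast
qed

lemma above_eq_coordinate_covers: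
  assumes x: "x \<in> A" "x \<notin> leaves A le_pair" and C: "coordinate_covers x C"
    and above_C: "\<forall>y\<in>above A le_pair x. \<exists>z\<in>C. le_pair z y"
  shows "above A le_pair x = C"
proof
  show sub: "above A le_pair x \<subseteq> C"
    using above_subset_coordinate_covers[OF x(1) C above_C] .
  show "C \<subseteq> above A le_pair x"
  proof
    fix c assume c: "c \<in> C"
    have c_in: "c \<in> ES \<times> ET" "le_pair x c"
      using aboveD[OF subsetD[OF coordinate_covers_subset_above[OF C in_prod[OF x(1)]] c]] by auto
    obtain l where l: "l \<in> leaf_pairs" "le_pair c l" using ex_leaf_pair_above[OF c_in(1)] by blast
    have l_in: "l \<in> A" "l \<in> ES \<times> ET" using l(1) leaves_eq unfolding leaves_def by auto
    have "le_pair x l" using le_pair_trans[OF in_prod[OF x(1)] c_in(1) l_in(2) c_in(2) l(2)] .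
    moreover have "l \<noteq> x" using x(2) l(1) leaves_eq by blast
    ultimately obtain y where y: "y \<in> above A le_pair x" "le_pair y l"
      using A.ex_above_below[OF x(1) l_in(1)] by blast
    have "y \<in> C" using sub y(1) by blast
    then have "c = y"
      using coordinate_covers_eq_if_common_upper[OF C c _ l_in(2) l(2) y(2)] by blast
    then show "c \<in> above A le_pair x" using y(1) by blast
  qed
qed

text \<open>If one cover of x keeps the first coordinate and another keeps the second, a leaf pair
  above both makes them comparable, which is impossible for distinct covers.\<close>

lemma above_eq_covers:
  assumes x: "x \<in> A" "x \<notin> leaves A le_pair"
  shows "above A le_pair x = covers_fst ES leS x \<or> above A le_pair x = covers_snd ET leT x"
proof (cases "\<forall>y\<in>above A le_pair x. \<exists>z\<in>covers_fst ES leS x. le_pair z y")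
  case True
  then show ?thesis using above_eq_coordinate_covers[OF x] unfolding coordinate_covers_def by blast
next
  case False
  then obtain y1 where y1: "y1 \<in> above A le_pair x"
    and no_fst: "\<not> (\<exists>z\<in>covers_fst ES leS x. le_pair z y1)" by blast
  note y1_in = aboveD[OF y1(1)]
  have "fst y1 = fst x"
    using ex_covers_fst_below_iff[OF in_prod[OF x(1)] in_prod[OF y1_in(1)] y1_in(2)]
      no_fst by blast
  have "\<exists>z\<in>covers_snd ET leT x. le_pair z y2" if y2: "y2 \<in> above A le_pair x" for y2
  proof (rule ccontr)
    assume no_snd: "\<not> (\<exists>z\<in>covers_snd ET leT x. le_pair z y2)"
    note y2_in = aboveD[OF y2]
    have "snd y2 = snd x"
      using ex_covers_snd_below_iff[OF in_prod[OF x(1)] in_prod[OF y2_in(1)] y2_in(2)] no_snd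
      by blast
    obtain l where l: "l \<in> leaves ES leS" "leS (fst y2) l"
      using S.ex_leaf_above in_prod[OF y2_in(1)] by (auto simp: mem_Times_iff)
    obtain m where m: "m \<in> leaves ET leT" "leT (snd y1) m"
      using T.ex_leaf_above in_prod[OF y1_in(1)] by (auto simp: mem_Times_iff)
    have lm: "(l, m) \<in> A" "(l, m) \<in> ES \<times> ET"
      using l(1) m(1) leaves_eq unfolding leaves_def by auto
    have "le_pair y1 (l, m)" "le_pair y2 (l, m)"
      using l m \<open>fst y1 = fst x\<close> \<open>snd y2 = snd x\<close> y1_in(2) y2_in(2)
        in_prod[OF y1_in(1)] in_prod[OF y2_in(1)]
        lm(2) S.trans[of "fst y1" "fst y2" l] T.trans[of "snd y2" "snd y1" m]
      unfolding prod_le_def by (auto simp: mem_Times_iff)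
    then have "le_pair y1 y2 \<or> le_pair y2 y1"
      using A.below_linear[OF lm(1) y1_in(1) y2_in(1)] by blast
    then have "y1 = y2" using above_antichain[OF y1(1) y2] above_antichain[OF y2 y1(1)] by blast
    then show False using \<open>fst y1 = fst x\<close> \<open>snd y2 = snd x\<close> y1_in(3) by (simp add: prod_eq_iff)
  qed
  then show ?thesis
    using above_eq_coordinate_covers[OF x] unfolding coordinate_covers_def by blast
qed

lemma is_shuffle_id: "is_shuffle ES leS ET leT A le_pair id"
  unfolding is_shuffle_iff using treelike_A subset_prod tree_root_A leaves_eq above_eq_covers
  by (simp add: bij_betw_id_iff)

end

lemma labelled_iso_if_same_labels:
  assumes "treelike ES leS" "treelike ET leT"
    and "is_shuffle ES leS ET leT EA leA labA" "is_shuffle ES leS ET leT EB leB labB"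
    and same_labels: "labA ` EA = labB ` EB"
  shows "labelled_iso EA leA labA EB leB labB"
proof -
  interpret A: shuffle ES leS ET leT EA leA labA
    using assms by (intro shuffle.intro tree_pair.intro tree_order.intro shuffle_axioms.intro)
  interpret B: shuffle ES leS ET leT EB leB labB
    using assms by (intro shuffle.intro tree_pair.intro tree_order.intro shuffle_axioms.intro)
  define f where "f = the_inv_into EB labB \<circ> labA"
  have f: "bij_betw f EA EB"
    unfolding f_def using bij_betw_trans[OF inj_on_imp_bij_betw[OF A.inj_on_lab]]
      bij_betw_the_inv_into[OF inj_on_imp_bij_betw[OF B.inj_on_lab]] same_labels by simp
  have labB_f: "labB (f x) = labA x" if "x \<in> EA" for x
  proof -
    have "labA x \<in> labB ` EB" using that same_labels by blast
    then show ?thesis unfolding f_def using f_the_inv_into_f[OF B.inj_on_lab] by simp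
  qed
  have "leA x y \<longleftrightarrow> leB (f x) (f y)" if "x \<in> EA" "y \<in> EA" for x y
    using A.le_iff_le_pair[OF that] B.le_iff_le_pair[OF bij_betw_apply[OF f] bij_betw_apply[OF f]]
      that labB_f by simp
  then show ?thesis unfolding labelled_iso_def using f labB_f by blast
qed

theorem mainTheorem2:
  fixes ES :: "'a set" and leS :: "'a \<Rightarrow> 'a \<Rightarrow> bool"
    and ET :: "'b set" and leT :: "'b \<Rightarrow> 'b \<Rightarrow> bool"
  assumes "treelike ES leS" and "treelike ET leT"
  shows
    "(\<forall>(EA :: 'c set) leA lab. is_shuffle ES leS ET leT EA leA lab \<longrightarrow>
        shuffle_set ES leS ET leT (lab ` EA)) \<and>
     (\<forall>(EA :: 'c set) leA labA (EB :: 'd set) leB labB.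
        is_shuffle ES leS ET leT EA leA labA \<and> is_shuffle ES leS ET leT EB leB labB \<and>
        labA ` EA = labB ` EB \<longrightarrow> labelled_iso EA leA labA EB leB labB) \<and>
     (\<forall>A. shuffle_set ES leS ET leT A \<longrightarrow>
        (\<exists>(EA :: ('a \<times> 'b) set) leA lab. is_shuffle ES leS ET leT EA leA lab \<and> lab ` EA = A)) \<and>
     (\<forall>(EA :: 'c set) leA lab. is_shuffle ES leS ET leT EA leA lab \<longrightarrow>
        (\<forall>x\<in>EA. \<forall>y\<in>EA. leA x y \<longleftrightarrow> prod_le leS leT (lab x) (lab y)))"
proof -
  have shuffle: "shuffle ES leS ET leT EA leA lab"
    if "is_shuffle ES leS ET leT EA leA lab" for EA :: "'c set" and leA lab
    using assms that by (intro shuffle.intro tree_pair.intro tree_order.intro shuffle_axioms.intro)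
  have identity_shuffle: "is_shuffle ES leS ET leT A (prod_le leS leT) id"
    if "shuffle_set ES leS ET leT A" for A
    using assms that
    by (intro maximal_shuffle_set.is_shuffle_id maximal_shuffle_set.intro tree_pair.intro
        tree_order.intro maximal_shuffle_set_axioms.intro)
  have "\<exists>(EA :: ('a \<times> 'b) set) leA lab. is_shuffle ES leS ET leT EA leA lab \<and> lab ` EA = A"
    if "shuffle_set ES leS ET leT A" for A
    using identity_shuffle[OF that]
    by (intro exI[of _ A] exI[of _ "prod_le leS leT"] exI[of _ id]) simp
  moreover have "labelled_iso EA leA labA EB leB labB"
    if "is_shuffle ES leS ET leT EA leA labA" "is_shuffle ES leS ET leT EB leB labB"
      "labA ` EA = labB ` EB" for EA :: "'c set" and leA labA and EB :: "'d set" and leB labB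
    using labelled_iso_if_same_labels[OF assms that] .
  ultimately show ?thesis
    using shuffle.shuffle_set_image[OF shuffle] shuffle.le_iff_le_pair[OF shuffle] by auto
qed

end
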